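(* Let $X$ be a (complete) doubling metric measure space, let $E\subset X$ be a closed set, and assume $\overline{\operatorname{co\,dim}}_A(E)<q$. Then there exists a constant $C>0$ such that \[\mathcal H^{\mu,q}_R\big(E\cap B(w,R)\big)\ge C\,R^{-q}\mu(B(w,R))\] for every $w\in E$ and all $0<R<\operatorname{diam}(E)$.
   Context: $(X,d,\mu)$ is a complete metric space with a Borel measure $\mu$ such that every closed ball $B(x,r)=\{y:d(x,y)\le r\}$, $r>0$, has $0<\mu(B(x,r))<\infty$, and $\mu$ is doubling. For $E\subset X$ and $r>0$, $E_r=\{x\in X:\operatorname{dist}(x,E)<r\}$. The upper Assouad codimension $\overline{\operatorname{co\,dim}}_A(E)$ is the infimum of all $s\ge0$ for which there is $c>0$ such that $\frac{\mu(E_r\cap B(x,R))}{\mu(B(x,R))}\ge c(r/R)^s$ for every $x\in E$ and all $0<r<R<\operatorname{diam}(E)$. For $q\ge0$ and $R>0$, the Hausdorff content of codimension $q$ is $\mathcal H_R^{\mu,q}(A)=\inf\{\sum_k\operatorname{rad}(B_k)^{-q}\mu(B_k): A\subset\bigcup_k B_k,\ \operatorname{rad}(B_k)\le R\}$, the infimum over countable covers by balls. *)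

theory Defs
  imports "HOL-Analysis.Analysis"
begin

definition doubling_mms :: "('a::metric_space) measure \<Rightarrow> bool" where
  "doubling_mms \<mu> \<longleftrightarrow>
     sets \<mu> = sets borel \<and>
     (\<forall>x r. r > 0 \<longrightarrow> 0 < emeasure \<mu> (cball x r) \<and> emeasure \<mu> (cball x r) < \<infinity>) \<and>
     (\<exists>Cd. \<forall>x r. r > 0 \<longrightarrow> measure \<mu> (cball x (2 * r)) \<le> Cd * measure \<mu> (cball x r))"

definition ediam :: "('a::metric_space) set \<Rightarrow> ereal" where
  "ediam E = (SUP p\<in>E \<times> E. ereal (dist (fst p) (snd p)))"

definition nbhd :: "('a::metric_space) set \<Rightarrow> real \<Rightarrow> 'a set" where
  "nbhd E r = {x. infdist x E < r}"

text \<open>Upper Assouad codimension (infimum in the extended reals; empty set gives \<infinity>).\<close>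
definition upper_assouad_codim :: "('a::metric_space) measure \<Rightarrow> 'a set \<Rightarrow> ereal" where
  "upper_assouad_codim \<mu> E = Inf {ereal s | s. s \<ge> 0 \<and>
     (\<exists>c>0. \<forall>x\<in>E. \<forall>r R. 0 < r \<longrightarrow> r < R \<longrightarrow> ereal R < ediam E \<longrightarrow>
        measure \<mu> (nbhd E r \<inter> cball x R) / measure \<mu> (cball x R) \<ge> c * (r / R) powr s)}"

text \<open>Hausdorff content of codimension q at scale R: infimum over countable covers by
  closed balls, given as countable families of (centre, radius) pairs with 0 < radius \<le> R.\<close>
definition hausdorff_content_codim ::
    "('a::metric_space) measure \<Rightarrow> real \<Rightarrow> real \<Rightarrow> 'a set \<Rightarrow> ennreal" where
  "hausdorff_content_codim \<mu> q R A = Inf {(\<Sum>\<^sub>\<infinity>b\<in>\<B>. ennreal (snd b powr (-q) * measure \<mu> (cball (fst b) (snd b)))) | \<B>.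
      countable \<B> \<and> (\<forall>b\<in>\<B>. 0 < snd b \<and> snd b \<le> R) \<and> A \<subseteq> (\<Union>b\<in>\<B>. cball (fst b) (snd b))}"

end

theory Submission imports Defs begin

text \<open>
  Let \<open>Cd\<close> be a doubling constant of \<open>\<mu>\<close> and let \<open>s < q\<close>, \<open>c > 0\<close> witness the
  Assouad bound \<open>\<mu>(E\<^sub>r \<inter> B(x,R)) \<ge> c (r/R)^s \<mu>(B(x,R))\<close>.  Weigh a ball by
  \<open>w(x,r) = r^(-q) \<mu>(B(x,r))\<close> and fix \<open>\<delta> \<le> 1/8\<close> with \<open>\<delta>^(q-s) \<le> c/Cd^4\<close>.
  The core is a multiscale estimate, by induction on \<open>J\<close>: a finite cover of \<open>E \<inter> B(y,\<rho>)\<close> by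
  balls with radii in \<open>[\<delta>^J \<rho>, 2\<rho>]\<close> has total weight \<open>\<ge> K w(y,\<rho>)\<close>.  If a ball meeting
  \<open>E \<inter> B(y,\<rho>)\<close> has radius \<open>\<ge> \<delta>\<rho>\<close>, doubling alone gives this.  Otherwise, for a maximal
  \<open>4\<delta>\<rho>\<close>-separated net \<open>Z\<close> of \<open>E \<inter> B(y,3\<rho>/4)\<close>, the balls meeting the sets \<open>E \<inter> B(z,\<delta>\<rho>)\<close>,
  \<open>z \<in> Z\<close>, form disjoint subfamilies, the induction hypothesis at scale \<open>\<delta>\<rho>\<close> applies to each,
  and the Assouad bound gives \<open>\<Sum>\<^sub>z \<mu>(B(z,\<delta>\<rho>)) \<ge> \<delta>^q \<mu>(B(y,\<rho>))\<close>.  Finally \<open>E \<inter> B(w,R)\<close> is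
  compact (closed bounded sets are compact in a complete doubling space), so any countable cover
  yields a finite cover by doubled balls, to which the estimate applies.
\<close>

definition ball_weight :: "'a::metric_space measure \<Rightarrow> real \<Rightarrow> 'a \<Rightarrow> real \<Rightarrow> real" where
  "ball_weight \<mu> q x r = r powr (-q) * measure \<mu> (cball x r)"

lemma ball_weight_nonneg: "0 \<le> ball_weight \<mu> q x r"
  unfolding ball_weight_def by simp

definition separated :: "real \<Rightarrow> 'a::metric_space set \<Rightarrow> bool" where
  "separated \<epsilon> Z \<longleftrightarrow> (\<forall>a\<in>Z. \<forall>b\<in>Z. a \<noteq> b \<longrightarrow> \<epsilon> < dist a b)"

lemma separated_insert:
  "separated \<epsilon> (insert e Z) \<longleftrightarrow> separated \<epsilon> Z \<and> (\<forall>z\<in>Z. z \<noteq> e \<longrightarrow> \<epsilon> < dist e z)"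
  unfolding separated_def by (auto simp: dist_commute)

locale doubling_measure =
  fixes \<mu> :: "'a::metric_space measure" and Cd :: real
  assumes sets_borel: "sets \<mu> = sets borel"
    and cball_pos: "\<And>x r. r > 0 \<Longrightarrow> 0 < emeasure \<mu> (cball x r)"
    and cball_finite: "\<And>x r. r > 0 \<Longrightarrow> emeasure \<mu> (cball x r) < \<infinity>"
    and doubling: "\<And>x r. r > 0 \<Longrightarrow> measure \<mu> (cball x (2 * r)) \<le> Cd * measure \<mu> (cball x r)"

lemma doubling_mms_imp_doubling_measure:
  assumes "doubling_mms \<mu>"
  obtains Cd where "doubling_measure \<mu> Cd"
  using assms unfolding doubling_mms_def doubling_measure_def by blast

context doubling_measure
begin

lemma closed_sets: "closed A \<Longrightarrow> A \<in> sets \<mu>"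
  using sets_borel by simp

lemma cball_fmeasurable: "r > 0 \<Longrightarrow> cball x r \<in> fmeasurable \<mu>"
  by (intro fmeasurableI closed_sets cball_finite) auto

lemma measure_cball_pos: "r > 0 \<Longrightarrow> 0 < measure \<mu> (cball x r)"
  using cball_pos[of r x] cball_finite[of r x] by (simp add: emeasure_eq_measure2 cball_fmeasurable)

lemma measure_le_cball: "A \<in> sets \<mu> \<Longrightarrow> A \<subseteq> cball x r \<Longrightarrow> r > 0 \<Longrightarrow> measure \<mu> A \<le> measure \<mu> (cball x r)"
  by (rule measure_mono_fmeasurable) (auto intro: cball_fmeasurable)

lemma doubling_const_ge_1: "Cd \<ge> 1"
proof -
  have "measure \<mu> (cball undefined 1) \<le> measure \<mu> (cball undefined (2*1))"
    by (intro measure_le_cball closed_sets) auto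
  also have "\<dots> \<le> Cd * measure \<mu> (cball undefined 1)" by (rule doubling) simp
  finally show ?thesis using measure_cball_pos[of 1 undefined] by simp
qed

lemma doubling_iter: "t > 0 \<Longrightarrow> measure \<mu> (cball x (2^m * t)) \<le> Cd^m * measure \<mu> (cball x t)"
proof (induction m)
  case (Suc m)
  have "measure \<mu> (cball x (2^Suc m * t)) = measure \<mu> (cball x (2 * (2^m * t)))"
    by (simp add: mult.assoc)
  also have "\<dots> \<le> Cd * measure \<mu> (cball x (2^m * t))" using Suc by (intro doubling) simp
  also have "\<dots> \<le> Cd * (Cd^m * measure \<mu> (cball x t))"
    using Suc doubling_const_ge_1 by (intro mult_left_mono) auto
  finally show ?case by (simp add: mult.assoc)
qed simp

lemma measure_le_small_cball:
  assumes "t > 0" "A \<in> sets \<mu>" "A \<subseteq> cball x R" "R \<le> 2^m * t"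
  shows "measure \<mu> A \<le> Cd^m * measure \<mu> (cball x t)"
proof -
  have "measure \<mu> A \<le> measure \<mu> (cball x (2^m * t))"
    using assms by (intro measure_le_cball) auto
  also have "\<dots> \<le> Cd^m * measure \<mu> (cball x t)" using assms by (intro doubling_iter)
  finally show ?thesis .
qed

lemma measure_le_enlarged_cover:
  assumes "A \<in> sets \<mu>" "finite Z" "t > 0" "A \<subseteq> (\<Union>z\<in>Z. cball z (2^m * t))"
  shows "measure \<mu> A \<le> Cd^m * (\<Sum>z\<in>Z. measure \<mu> (cball z t))"
proof -
  have "measure \<mu> A \<le> measure \<mu> (\<Union>z\<in>Z. cball z (2^m * t))"
    using assms by (intro measure_mono_fmeasurable fmeasurable.finite_UN cball_fmeasurable) auto
  also have "\<dots> \<le> (\<Sum>z\<in>Z. measure \<mu> (cball z (2^m * t)))"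
    using assms by (intro measure_UNION_le closed_sets) auto
  also have "\<dots> \<le> (\<Sum>z\<in>Z. Cd^m * measure \<mu> (cball z t))"
    using assms by (intro sum_mono doubling_iter)
  finally show ?thesis by (simp add: sum_distrib_left)
qed

lemma ball_weight_double:
  assumes "r > 0"
  shows "ball_weight \<mu> q x (2 * r) \<le> 2 powr (-q) * Cd * ball_weight \<mu> q x r"
proof -
  have "ball_weight \<mu> q x (2 * r) \<le> (2 * r) powr (-q) * (Cd * measure \<mu> (cball x r))"
    unfolding ball_weight_def using doubling[OF assms] by (intro mult_left_mono) auto
  also have "\<dots> = 2 powr (-q) * Cd * ball_weight \<mu> q x r"
    unfolding ball_weight_def by (simp add: powr_mult)
  finally show ?thesis .
qed

text \<open>Volume counting: \<open>\<epsilon>\<close>-separated subsets of a fixed ball have uniformly bounded size, since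
  the disjoint balls \<open>B(z,\<epsilon>/2)\<close> each carry a fixed fraction of the measure of \<open>B(y,\<rho>+\<epsilon>/2)\<close>.\<close>
lemma separated_card_bound:
  fixes y :: 'a
  assumes "\<epsilon> > 0" "\<rho> > 0"
  obtains N :: real where
    "\<And>Z. finite Z \<Longrightarrow> Z \<subseteq> cball y \<rho> \<Longrightarrow> separated \<epsilon> Z \<Longrightarrow> real (card Z) \<le> N"
proof -
  obtain m where m: "(2*\<rho>+\<epsilon>) / (\<epsilon>/2) < 2^m" using real_arch_pow[of 2] by auto
  have m': "2*\<rho>+\<epsilon> \<le> 2^m * (\<epsilon>/2)" using m assms by (simp add: field_simps)
  define F where "F = cball y (\<rho> + \<epsilon>/2)"
  have F_pos: "0 < measure \<mu> F" unfolding F_def using assms by (intro measure_cball_pos) auto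
  have "real (card Z) \<le> Cd^m" if Z: "finite Z" "Z \<subseteq> cball y \<rho>" "separated \<epsilon> Z" for Z
  proof -
    have F_le: "measure \<mu> F \<le> Cd^m * measure \<mu> (cball z (\<epsilon>/2))" if "z \<in> Z" for z
    proof (rule measure_le_small_cball[where R="2*\<rho>+\<epsilon>"])
      show "F \<subseteq> cball z (2*\<rho>+\<epsilon>)"
      proof
        fix t assume "t \<in> F"
        moreover have "dist y z \<le> \<rho>" using Z that by auto
        ultimately show "t \<in> cball z (2*\<rho>+\<epsilon>)"
          unfolding F_def using dist_triangle[of z t y] assms by (simp add: dist_commute)
      qed
    qed (use assms m' F_def closed_sets in auto)
    have union_le: "measure \<mu> (\<Union>z\<in>Z. cball z (\<epsilon>/2)) \<le> measure \<mu> F"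
    proof (unfold F_def, intro measure_le_cball closed_sets closed_UN)
      show "(\<Union>z\<in>Z. cball z (\<epsilon>/2)) \<subseteq> cball y (\<rho> + \<epsilon>/2)"
      proof
        fix t assume "t \<in> (\<Union>z\<in>Z. cball z (\<epsilon>/2))"
        then obtain z where "z \<in> Z" "dist z t \<le> \<epsilon>/2" by auto
        moreover have "dist y z \<le> \<rho>" using Z(2) \<open>z \<in> Z\<close> by auto
        ultimately show "t \<in> cball y (\<rho> + \<epsilon>/2)" using dist_triangle[of y t z] by simp
      qed
    qed (use Z assms in auto)
    have union_eq: "measure \<mu> (\<Union>z\<in>Z. cball z (\<epsilon>/2)) = (\<Sum>z\<in>Z. measure \<mu> (cball z (\<epsilon>/2)))"
    proof (rule measure_UNION')
      show "pairwise (\<lambda>i j. disjnt (cball i (\<epsilon> / 2)) (cball j (\<epsilon> / 2))) Z"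
        using Z(3) unfolding pairwise_def disjnt_def separated_def
        by (auto simp: dist_commute) (smt (verit) dist_triangle2 dist_commute)
    qed (use Z assms cball_fmeasurable in auto)
    have "real (card Z) * measure \<mu> F = (\<Sum>z\<in>Z. measure \<mu> F)" by simp
    also have "\<dots> \<le> (\<Sum>z\<in>Z. Cd^m * measure \<mu> (cball z (\<epsilon>/2)))" by (intro sum_mono F_le)
    also have "\<dots> = Cd^m * measure \<mu> (\<Union>z\<in>Z. cball z (\<epsilon>/2))"
      by (simp add: union_eq sum_distrib_left)
    also have "\<dots> \<le> Cd^m * measure \<mu> F"
      using union_le doubling_const_ge_1 by (intro mult_left_mono) auto
    finally show ?thesis using F_pos by simp
  qed
  then show ?thesis using that by blast
qed

text \<open>Every subset of a ball contains a finite maximal \<open>\<epsilon>\<close>-separated set, i.e. a finite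
  \<open>\<epsilon>\<close>-separated \<open>\<epsilon>\<close>-net: take a separated subset of maximal cardinality.\<close>
lemma separated_net:
  fixes y :: 'a
  assumes "\<epsilon> > 0" "\<rho> > 0" "S \<subseteq> cball y \<rho>"
  obtains Z where "Z \<subseteq> S" "finite Z" "separated \<epsilon> Z" "\<And>e. e \<in> S \<Longrightarrow> \<exists>z\<in>Z. dist e z \<le> \<epsilon>"
proof -
  obtain N where N: "\<And>Z. finite Z \<Longrightarrow> Z \<subseteq> cball y \<rho> \<Longrightarrow> separated \<epsilon> Z \<Longrightarrow> real (card Z) \<le> N"
    using separated_card_bound[OF assms(1,2)] by blast
  define P where "P Z \<longleftrightarrow> finite Z \<and> Z \<subseteq> S \<and> separated \<epsilon> Z" for Z
  have "P {}" unfolding P_def separated_def by simp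
  moreover have "card Z < nat \<lceil>N\<rceil> + 1" if "P Z" for Z
  proof -
    have "real (card Z) \<le> N" using that assms(3) unfolding P_def by (intro N) auto
    then show ?thesis by linarith
  qed
  ultimately obtain Z where Z: "P Z" and maximal: "\<And>Y. P Y \<Longrightarrow> card Y \<le> card Z"
    using ex_has_greatest_nat[of P "{}" card "nat \<lceil>N\<rceil> + 1"] by metis
  have "\<exists>z\<in>Z. dist e z \<le> \<epsilon>" if e: "e \<in> S" for e
  proof (rule ccontr)
    assume "\<not> ?thesis"
    then have far: "\<forall>z\<in>Z. \<epsilon> < dist e z" by auto
    then have "e \<notin> Z" using assms(1) by fastforce
    moreover have "P (insert e Z)"
      using Z e far unfolding P_def by (auto simp: separated_insert)
    ultimately show False using maximal[of "insert e Z"] Z unfolding P_def by simp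
  qed
  then show ?thesis using that Z unfolding P_def by blast
qed

end

text \<open>In a complete space carrying a doubling measure, closed bounded sets are compact: they are
  complete, and totally bounded by \<open>separated_net\<close>.\<close>
lemma doubling_closed_bounded_compact:
  fixes \<mu> :: "'a::complete_space measure" and A :: "'a set"
  assumes "doubling_measure \<mu> Cd" "closed A" "bounded A"
  shows "compact A"
proof -
  interpret doubling_measure \<mu> Cd by (rule assms(1))
  obtain y \<rho> where A_sub: "A \<subseteq> cball y \<rho>" and "0 \<le> \<rho>"
    using assms(3) unfolding bounded_subset_cball by blast
  then have A_sub': "A \<subseteq> cball y (\<rho> + 1)" by auto
  have "\<exists>k. finite k \<and> A \<subseteq> (\<Union>x\<in>k. ball x \<epsilon>)" if "\<epsilon> > 0" for \<epsilon> :: real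
  proof -
    obtain Z where "Z \<subseteq> A" "finite Z" and net: "\<And>e. e \<in> A \<Longrightarrow> \<exists>z\<in>Z. dist e z \<le> \<epsilon>/2"
      by (rule separated_net[of "\<epsilon>/2" "\<rho> + 1" A y]) (use \<open>\<epsilon> > 0\<close> \<open>0 \<le> \<rho>\<close> A_sub' in auto)
    have "A \<subseteq> (\<Union>x\<in>Z. ball x \<epsilon>)"
      using \<open>\<epsilon> > 0\<close> by (force simp: dist_commute dest: net)
    then show ?thesis using \<open>finite Z\<close> by blast
  qed
  moreover have "complete A"
    using assms(2) by (intro complete_closed_subset[OF _ _ complete_UNIV]) auto
  ultimately show ?thesis by (simp add: compact_eq_totally_bounded)
qed

lemma nbhd_subset_net_balls:
  fixes E Z :: "'a::metric_space set"
  assumes "E \<noteq> {}" "0 < t" "t \<le> \<rho>/8"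
    and net: "\<And>e. e \<in> E \<inter> cball y (3*\<rho>/4) \<Longrightarrow> \<exists>z\<in>Z. dist e z \<le> 4*t"
  shows "nbhd E t \<inter> cball y (\<rho>/2) \<subseteq> (\<Union>z\<in>Z. cball z (8*t))"
proof
  fix x assume "x \<in> nbhd E t \<inter> cball y (\<rho>/2)"
  then have x_near: "infdist x E < t" and x_in: "dist y x \<le> \<rho>/2" unfolding nbhd_def by auto
  then have "(INF a\<in>E. dist x a) < t" using assms(1) by (simp add: infdist_notempty)
  then obtain a where a: "a \<in> E" "dist x a < t"
    using assms(1) by (subst (asm) cINF_less_iff) (auto intro: bdd_belowI[where m=0])
  have "dist y a \<le> 3*\<rho>/4" using dist_triangle[of y a x] x_in a(2) assms(2,3) by linarith
  then have "a \<in> E \<inter> cball y (3*\<rho>/4)" using a(1) by simp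
  then obtain z where z: "z \<in> Z" "dist a z \<le> 4*t" using net by blast
  have "dist z x \<le> 8*t" using dist_triangle[of z x a] z(2) a(2) assms(2) by (simp add: dist_commute)
  then show "x \<in> (\<Union>z\<in>Z. cball z (8*t))" using z(1) by auto
qed

lemma separated_small_ball_unique:
  fixes x z z' p p' :: "'a::metric_space"
  assumes "separated (4*t) Z" "z \<in> Z" "z' \<in> Z" "r < t"
    and "dist z p \<le> t" "dist x p \<le> r" "dist z' p' \<le> t" "dist x p' \<le> r"
  shows "z = z'"
proof (rule ccontr)
  assume "z \<noteq> z'"
  then have "4*t < dist z z'" using assms(1-3) unfolding separated_def by blast
  moreover have "dist z x \<le> dist z p + dist x p" using dist_triangle[of z x p] by (simp add: dist_commute)
  moreover have "dist x z' \<le> dist x p' + dist z' p'" using dist_triangle[of x z' p'] by (simp add: dist_commute)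
  moreover have "dist z z' \<le> dist z x + dist x z'" by (rule dist_triangle)
  ultimately show False using assms(4-8) by linarith
qed

lemma finite_doubled_subcover:
  fixes \<B> :: "('a::metric_space \<times> real) set"
  assumes "compact A" "A \<subseteq> (\<Union>b\<in>\<B>. cball (fst b) (snd b))" "\<forall>b\<in>\<B>. 0 < snd b"
  obtains \<B>' where "\<B>' \<subseteq> \<B>" "finite \<B>'" "A \<subseteq> (\<Union>b\<in>\<B>'. cball (fst b) (2 * snd b))"
proof -
  have cover: "A \<subseteq> (\<Union>b\<in>\<B>. ball (fst b) (2 * snd b))"
  proof
    fix x assume "x \<in> A"
    then obtain b where b: "b \<in> \<B>" "dist (fst b) x \<le> snd b" using assms(2) by auto
    then have "dist (fst b) x < 2 * snd b" using assms(3) by fastforce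
    then show "x \<in> (\<Union>b\<in>\<B>. ball (fst b) (2 * snd b))" using b(1) by auto
  qed
  obtain \<B>' where sub: "\<B>' \<subseteq> \<B>" and fin: "finite \<B>'"
    and small_cover: "A \<subseteq> (\<Union>b\<in>\<B>'. ball (fst b) (2 * snd b))"
    using compactE_image[OF assms(1) _ cover] by (metis open_ball)
  have "(\<Union>b\<in>\<B>'. ball (fst b) (2 * snd b)) \<subseteq> (\<Union>b\<in>\<B>'. cball (fst b) (2 * snd b))"
    by auto
  with small_cover show ?thesis using that[OF sub fin] by (meson order_trans)
qed

lemma upper_assouad_codim_less:
  assumes "upper_assouad_codim \<mu> E < ereal q"
  obtains s c where "0 \<le> s" "s < q" "c > 0"
    "\<And>x r R. x \<in> E \<Longrightarrow> 0 < r \<Longrightarrow> r < R \<Longrightarrow> ereal R < ediam E \<Longrightarrow>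
       c * (r / R) powr s \<le> measure \<mu> (nbhd E r \<inter> cball x R) / measure \<mu> (cball x R)"
proof -
  from assms obtain s where "0 \<le> s" "ereal s < ereal q" and
    "\<exists>c>0. \<forall>x\<in>E. \<forall>r R. 0 < r \<longrightarrow> r < R \<longrightarrow> ereal R < ediam E \<longrightarrow>
        measure \<mu> (nbhd E r \<inter> cball x R) / measure \<mu> (cball x R) \<ge> c * (r / R) powr s"
    unfolding upper_assouad_codim_def Inf_less_iff by blast
  then show ?thesis using that by auto
qed

lemma hausdorff_content_codim_lower_bound:
  assumes "\<And>\<B>. countable \<B> \<Longrightarrow> \<forall>b\<in>\<B>. 0 < snd b \<and> snd b \<le> R \<Longrightarrow>
      A \<subseteq> (\<Union>b\<in>\<B>. cball (fst b) (snd b)) \<Longrightarrow>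
      a \<le> (\<Sum>\<^sub>\<infinity>b\<in>\<B>. ennreal (ball_weight \<mu> q (fst b) (snd b)))"
  shows "a \<le> hausdorff_content_codim \<mu> q R A"
  unfolding hausdorff_content_codim_def
  using assms unfolding ball_weight_def by (intro Inf_greatest) blast

lemma power_scale_below_finite:
  fixes d R :: real and f :: "'b \<Rightarrow> real"
  assumes "\<bar>d\<bar> < 1" "finite A" "\<And>a. a \<in> A \<Longrightarrow> 0 < f a"
  obtains J :: nat where "\<And>a. a \<in> A \<Longrightarrow> d^J * R \<le> f a"
proof -
  have "(\<lambda>J. d^J * R) \<longlonglongrightarrow> 0 * R"
    using assms(1) by (intro tendsto_mult LIMSEQ_power_zero tendsto_const) simp
  then have "\<forall>a\<in>A. eventually (\<lambda>J. d^J * R < f a) sequentially"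
    using assms(3) by (auto intro: order_tendstoD(2))
  then have "eventually (\<lambda>J. \<forall>a\<in>A. d^J * R < f a) sequentially"
    using assms(2) by (simp add: eventually_ball_finite_distrib)
  then obtain N where "\<forall>J\<ge>N. \<forall>a\<in>A. d^J * R < f a" unfolding eventually_sequentially by blast
  then have "d^N * R \<le> f a" if "a \<in> A" for a using that by (simp add: less_imp_le)
  then show ?thesis using that by blast
qed

locale codim_bound = doubling_measure +
  fixes E :: "'a::metric_space set" and c s q :: real
  assumes c_pos: "c > 0" and s_nonneg: "0 \<le> s" and s_less_q: "s < q"
    and assouad: "\<And>x r R. x \<in> E \<Longrightarrow> 0 < r \<Longrightarrow> r < R \<Longrightarrow> ereal R < ediam E \<Longrightarrow>
       c * (r/R) powr s \<le> measure \<mu> (nbhd E r \<inter> cball x R) / measure \<mu> (cball x R)"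
begin

definition \<delta> :: real where "\<delta> = min (1/8) ((c / Cd^4) powr (1/(q-s)))"

lemma q_pos: "q > 0" using s_nonneg s_less_q by simp

lemma \<delta>_pos: "0 < \<delta>"
  unfolding \<delta>_def using c_pos doubling_const_ge_1 by simp

lemma \<delta>_le: "\<delta> \<le> 1/8" unfolding \<delta>_def by simp

text \<open>The choice of \<open>\<delta>\<close>: the gain \<open>\<delta>^(q-s)\<close> beats the loss \<open>Cd^4/c\<close> of the Assouad step.\<close>
lemma \<delta>_powr_q_le: "\<delta> powr q \<le> c / Cd^4 * \<delta> powr s"
proof -
  have "\<delta> powr (q - s) \<le> ((c / Cd^4) powr (1/(q-s))) powr (q - s)"
    using s_less_q \<delta>_pos by (intro powr_mono2) (auto simp: \<delta>_def)
  also have "\<dots> = c / Cd^4" using s_less_q c_pos doubling_const_ge_1 by (simp add: powr_powr)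
  finally have "\<delta> powr (q - s) * \<delta> powr s \<le> c / Cd^4 * \<delta> powr s"
    by (intro mult_right_mono) auto
  then show ?thesis by (simp add: powr_add[symmetric])
qed

text \<open>\<open>2^m\<^sub>0\<close> is a doubling exponent reaching from scale \<open>\<delta>\<rho>\<close> to scale \<open>4\<rho>\<close>.\<close>
definition m\<^sub>0 :: nat where "m\<^sub>0 = (LEAST m. 4/\<delta> \<le> 2^m)"

lemma m\<^sub>0: "4/\<delta> \<le> 2^m\<^sub>0"
proof -
  obtain m :: nat where "4/\<delta> < 2^m" using real_arch_pow[of 2 "4/\<delta>"] by auto
  then have "4/\<delta> \<le> 2^m" by simp
  then show ?thesis unfolding m\<^sub>0_def by (rule LeastI)
qed

definition K :: real where "K = 2 powr (-q) / Cd^m\<^sub>0"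

lemma K_pos: "K > 0" unfolding K_def using doubling_const_ge_1 by simp

text \<open>Base case of the multiscale estimate: a single ball of radius \<open>r \<in> [\<delta>\<rho>, 2\<rho>]\<close> meeting
  \<open>B(y,\<rho>)\<close> already carries weight \<open>\<ge> K w(y,\<rho>)\<close>, since \<open>B(y,\<rho>) \<subseteq> B(x,4\<rho>)\<close> and \<open>4\<rho> \<le> 2^m\<^sub>0 r\<close>.\<close>
lemma large_ball_weight:
  assumes "\<rho> > 0" "\<delta>*\<rho> \<le> r" "r \<le> 2*\<rho>" "p \<in> cball x r" "p \<in> cball y \<rho>"
  shows "K * ball_weight \<mu> q y \<rho> \<le> ball_weight \<mu> q x r"
proof -
  have r_pos: "r > 0" using assms(1,2) \<delta>_pos by (smt (verit) mult_pos_pos)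
  have measure_le: "measure \<mu> (cball y \<rho>) \<le> Cd^m\<^sub>0 * measure \<mu> (cball x r)"
  proof (rule measure_le_small_cball[where R="4*\<rho>"])
    show "cball y \<rho> \<subseteq> cball x (4*\<rho>)"
    proof
      fix t assume "t \<in> cball y \<rho>"
      then show "t \<in> cball x (4*\<rho>)"
        using assms(3-5) dist_triangle[of x t p] dist_triangle[of p t y] by (simp add: dist_commute)
    qed
    have "4*\<rho> = (4/\<delta>) * (\<delta>*\<rho>)" using \<delta>_pos by simp
    also have "\<dots> \<le> 2^m\<^sub>0 * r" using m\<^sub>0 assms(1,2) \<delta>_pos by (intro mult_mono) auto
    finally show "4*\<rho> \<le> 2^m\<^sub>0 * r" .
  qed (use r_pos closed_sets in auto)
  have "K * ball_weight \<mu> q y \<rho> = (2*\<rho>) powr (-q) * (measure \<mu> (cball y \<rho>) / Cd^m\<^sub>0)"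
    unfolding K_def ball_weight_def by (simp add: powr_mult)
  also have "\<dots> \<le> (2*\<rho>) powr (-q) * measure \<mu> (cball x r)"
    using measure_le doubling_const_ge_1 by (intro mult_left_mono) (auto simp: divide_le_eq mult.commute)
  also have "\<dots> \<le> ball_weight \<mu> q x r"
    unfolding ball_weight_def using q_pos r_pos assms(3) by (intro mult_right_mono powr_mono2') auto
  finally show ?thesis .
qed

text \<open>The Assouad step: if \<open>Z\<close> is a finite \<open>4\<delta>\<rho>\<close>-net of \<open>E \<inter> B(y,3\<rho>/4)\<close>, then the small balls
  \<open>B(z,\<delta>\<rho>)\<close> carry at least a fraction \<open>\<delta>^q\<close> of the measure of \<open>B(y,\<rho>)\<close>.  Indeed they cover,
  after enlargement by \<open>8\<close>, the \<open>\<delta>\<rho>\<close>-neighbourhood of \<open>E\<close> in \<open>B(y,\<rho>/2)\<close>, whose measure is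
  controlled from below by the Assouad bound.\<close>
lemma net_mass:
  assumes y: "y \<in> E" and \<rho>: "\<rho> > 0" "ereal \<rho> < ediam E" and Z: "finite Z"
    and net: "\<And>e. e \<in> E \<inter> cball y (3*\<rho>/4) \<Longrightarrow> \<exists>z\<in>Z. dist e z \<le> 4*(\<delta>*\<rho>)"
  shows "\<delta> powr q * measure \<mu> (cball y \<rho>) \<le> (\<Sum>z\<in>Z. measure \<mu> (cball z (\<delta>*\<rho>)))"
proof -
  define A where "A = nbhd E (\<delta>*\<rho>) \<inter> cball y (\<rho>/2)"
  define M where "M = (\<Sum>z\<in>Z. measure \<mu> (cball z (\<delta>*\<rho>)))"
  have t_pos: "0 < \<delta>*\<rho>" using \<delta>_pos \<rho> by simp
  have t_le: "\<delta>*\<rho> \<le> \<rho>/8" using \<delta>_le \<rho> by (simp add: mult_right_mono)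
  have y_half_pos: "0 < measure \<mu> (cball y (\<rho>/2))" using \<rho> by (intro measure_cball_pos) simp
  have "ereal (\<rho>/2) < ediam E" using \<rho> by (simp add: le_less_trans[of _ "ereal \<rho>"])
  moreover have "\<delta>*\<rho> < \<rho>/2" using t_le \<rho> by linarith
  ultimately have "c * ((\<delta>*\<rho>)/(\<rho>/2)) powr s \<le> measure \<mu> A / measure \<mu> (cball y (\<rho>/2))"
    unfolding A_def using assouad y t_pos by blast
  moreover have "(\<delta>*\<rho>)/(\<rho>/2) = 2*\<delta>" using \<rho> by simp
  ultimately have A_lower: "c * (2*\<delta>) powr s * measure \<mu> (cball y (\<rho>/2)) \<le> measure \<mu> A"
    using y_half_pos by (simp add: le_divide_eq)
  have "open (nbhd E (\<delta>*\<rho>))" unfolding nbhd_def by (intro open_Collect_less continuous_intros)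
  then have A_sets: "A \<in> sets \<mu>" unfolding A_def using sets_borel by simp
  have "A \<subseteq> (\<Union>z\<in>Z. cball z (2^3 * (\<delta>*\<rho>)))"
    unfolding A_def using nbhd_subset_net_balls[OF _ t_pos t_le net] y by auto
  then have A_upper: "measure \<mu> A \<le> Cd^3 * M"
    unfolding M_def using A_sets Z t_pos by (intro measure_le_enlarged_cover)
  have "c * (2*\<delta>) powr s * measure \<mu> (cball y \<rho>) \<le> c * (2*\<delta>) powr s * (Cd * measure \<mu> (cball y (\<rho>/2)))"
    using doubling[of "\<rho>/2" y] \<rho> c_pos by (intro mult_left_mono) auto
  also have "\<dots> \<le> Cd * (Cd^3 * M)"
    using A_lower A_upper doubling_const_ge_1 by (simp add: mult_left_mono mult.left_commute order_trans)
  finally have main: "c * (2*\<delta>) powr s * measure \<mu> (cball y \<rho>) \<le> Cd^4 * M"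
    by (simp add: power_Suc[symmetric] mult.assoc[symmetric] eval_nat_numeral)
  have y_pos: "0 < measure \<mu> (cball y \<rho>)" using \<rho> by (intro measure_cball_pos)
  have "\<delta> powr q * measure \<mu> (cball y \<rho>) \<le> c / Cd^4 * \<delta> powr s * measure \<mu> (cball y \<rho>)"
    using \<delta>_powr_q_le y_pos by (intro mult_right_mono) auto
  also have "\<dots> \<le> c / Cd^4 * (2*\<delta>) powr s * measure \<mu> (cball y \<rho>)"
    using y_pos c_pos doubling_const_ge_1 s_nonneg \<delta>_pos by (intro mult_right_mono mult_left_mono powr_mono2) auto
  also have "\<dots> \<le> M" using main doubling_const_ge_1 by (simp add: divide_le_eq mult.commute)
  finally show ?thesis unfolding M_def .
qed

text \<open>Summing local estimates over a net: if pairwise disjoint subfamilies \<open>F z \<subseteq> I\<close>, indexed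
  by a \<open>4\<delta>\<rho>\<close>-net \<open>Z\<close> of \<open>E \<inter> B(y,3\<rho>/4)\<close>, carry weight \<open>\<ge> K w(z,\<delta>\<rho>)\<close>, then \<open>I\<close> carries weight
  \<open>\<ge> K w(y,\<rho>)\<close>; this is \<open>net_mass\<close> rescaled by \<open>(\<delta>\<rho>)^(-q)\<close>.\<close>
lemma weight_from_net:
  fixes f :: "'b \<Rightarrow> real" and F :: "'a \<Rightarrow> 'b set"
  assumes y: "y \<in> E" and \<rho>: "\<rho> > 0" "ereal \<rho> < ediam E" and Z: "finite Z"
    and net: "\<And>e. e \<in> E \<inter> cball y (3*\<rho>/4) \<Longrightarrow> \<exists>z\<in>Z. dist e z \<le> 4*(\<delta>*\<rho>)"
    and I: "finite I" "\<And>i. i \<in> I \<Longrightarrow> 0 \<le> f i"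
    and F_sub: "\<And>z. z \<in> Z \<Longrightarrow> F z \<subseteq> I"
    and F_disj: "\<And>z z'. z \<in> Z \<Longrightarrow> z' \<in> Z \<Longrightarrow> z \<noteq> z' \<Longrightarrow> F z \<inter> F z' = {}"
    and local: "\<And>z. z \<in> Z \<Longrightarrow> K * ball_weight \<mu> q z (\<delta>*\<rho>) \<le> (\<Sum>i\<in>F z. f i)"
  shows "K * ball_weight \<mu> q y \<rho> \<le> (\<Sum>i\<in>I. f i)"
proof -
  have rescale: "K * ball_weight \<mu> q y \<rho> = K * (\<delta>*\<rho>) powr (-q) * (\<delta> powr q * measure \<mu> (cball y \<rho>))"
    using \<delta>_pos \<rho> by (simp add: ball_weight_def powr_mult powr_minus field_simps)
  have "K * ball_weight \<mu> q y \<rho> \<le> K * (\<delta>*\<rho>) powr (-q) * (\<Sum>z\<in>Z. measure \<mu> (cball z (\<delta>*\<rho>)))"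
    unfolding rescale using net_mass[OF y \<rho> Z net] K_pos by (intro mult_left_mono) auto
  also have "\<dots> = (\<Sum>z\<in>Z. K * ball_weight \<mu> q z (\<delta>*\<rho>))"
    by (simp add: ball_weight_def sum_distrib_left mult.assoc)
  also have "\<dots> \<le> (\<Sum>z\<in>Z. \<Sum>i\<in>F z. f i)" using local by (intro sum_mono)
  also have "\<dots> = (\<Sum>i\<in>(\<Union>z\<in>Z. F z). f i)"
    using Z I(1) F_sub F_disj by (subst sum.UNION_disjoint) (auto intro: finite_subset)
  also have "\<dots> \<le> (\<Sum>i\<in>I. f i)" using I F_sub by (intro sum_mono2) auto
  finally show ?thesis .
qed

text \<open>Inductive step of the multiscale estimate when every ball meeting \<open>E \<inter> B(y,\<rho>)\<close> is small
  (radius \<open>< \<delta>\<rho>\<close>).  For the points \<open>z\<close> of a \<open>4\<delta>\<rho>\<close>-separated net, the balls meeting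
  \<open>E \<inter> B(z,\<delta>\<rho>)\<close> form pairwise disjoint subfamilies covering \<open>E \<inter> B(z,\<delta>\<rho>)\<close>; by the hypothesis
  \<open>at_scale\<close> (the estimate at scale \<open>\<delta>\<rho>\<close>) each has weight \<open>\<ge> K w(z,\<delta>\<rho>)\<close>, and
  \<open>weight_from_net\<close> adds them up.\<close>
lemma small_balls_weight:
  fixes ctr :: "'b \<Rightarrow> 'a" and r :: "'b \<Rightarrow> real"
  assumes at_scale: "\<And>z I'. z \<in> E \<Longrightarrow> I' \<subseteq> I \<Longrightarrow> (\<forall>i\<in>I'. r i \<le> 2*(\<delta>*\<rho>)) \<Longrightarrow>
      E \<inter> cball z (\<delta>*\<rho>) \<subseteq> (\<Union>i\<in>I'. cball (ctr i) (r i)) \<Longrightarrow>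
      K * ball_weight \<mu> q z (\<delta>*\<rho>) \<le> (\<Sum>i\<in>I'. ball_weight \<mu> q (ctr i) (r i))"
    and y: "y \<in> E" and \<rho>: "0 < \<rho>" "ereal \<rho> < ediam E" and fin: "finite I"
    and cov: "E \<inter> cball y \<rho> \<subseteq> (\<Union>i\<in>I. cball (ctr i) (r i))"
    and small: "\<And>i p. i \<in> I \<Longrightarrow> p \<in> E \<inter> cball y \<rho> \<Longrightarrow> p \<in> cball (ctr i) (r i) \<Longrightarrow> r i < \<delta>*\<rho>"
  shows "K * ball_weight \<mu> q y \<rho> \<le> (\<Sum>i\<in>I. ball_weight \<mu> q (ctr i) (r i))"
proof -
  define S where "S = E \<inter> cball y (3*\<rho>/4)"
  have t_pos: "0 < \<delta>*\<rho>" using \<delta>_pos \<rho> by simp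
  have t_le: "\<delta>*\<rho> \<le> \<rho>/8" using \<delta>_le \<rho> by (simp add: mult_right_mono)
  obtain Z where Z: "Z \<subseteq> S" "finite Z" and sep: "separated (4*(\<delta>*\<rho>)) Z"
    and net: "\<And>e. e \<in> S \<Longrightarrow> \<exists>z\<in>Z. dist e z \<le> 4*(\<delta>*\<rho>)"
    by (rule separated_net[of "4*(\<delta>*\<rho>)" "3*\<rho>/4" S y]) (use t_pos \<rho> in \<open>auto simp: S_def\<close>)
  define I\<^sub>z where "I\<^sub>z z = {i\<in>I. \<exists>p\<in>E \<inter> cball z (\<delta>*\<rho>). p \<in> cball (ctr i) (r i)}" for z
  have near_y: "E \<inter> cball z (\<delta>*\<rho>) \<subseteq> E \<inter> cball y \<rho>" if "z \<in> Z" for z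
  proof -
    have y_z: "dist y z \<le> 3*\<rho>/4" using Z that unfolding S_def by auto
    show ?thesis
    proof
      fix t assume t: "t \<in> E \<inter> cball z (\<delta>*\<rho>)"
      then have "dist z t \<le> \<delta>*\<rho>" by simp
      then have "dist y t \<le> \<rho>" using y_z t_le \<rho>(1) dist_triangle[of y t z] by linarith
      then show "t \<in> E \<inter> cball y \<rho>" using t by simp
    qed
  qed
  have local_weight: "K * ball_weight \<mu> q z (\<delta>*\<rho>) \<le> (\<Sum>i\<in>I\<^sub>z z. ball_weight \<mu> q (ctr i) (r i))"
    if "z \<in> Z" for z
  proof (rule at_scale)
    show "z \<in> E" using Z that unfolding S_def by auto
    show "I\<^sub>z z \<subseteq> I" unfolding I\<^sub>z_def by blast
    show "\<forall>i\<in>I\<^sub>z z. r i \<le> 2*(\<delta>*\<rho>)"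
      using small near_y[OF that] t_pos unfolding I\<^sub>z_def by (fastforce dest!: less_imp_le)
    show "E \<inter> cball z (\<delta>*\<rho>) \<subseteq> (\<Union>i\<in>I\<^sub>z z. cball (ctr i) (r i))"
      using cov near_y[OF that] unfolding I\<^sub>z_def by blast
  qed
  have disjoint: "I\<^sub>z z \<inter> I\<^sub>z z' = {}" if "z \<in> Z" "z' \<in> Z" "z \<noteq> z'" for z z'
  proof (rule ccontr)
    assume "I\<^sub>z z \<inter> I\<^sub>z z' \<noteq> {}"
    then obtain i p p' where i: "i \<in> I" and p: "p \<in> E" "dist z p \<le> \<delta>*\<rho>" "dist (ctr i) p \<le> r i"
      and p': "dist z' p' \<le> \<delta>*\<rho>" "dist (ctr i) p' \<le> r i"
      unfolding I\<^sub>z_def by auto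
    have "r i < \<delta>*\<rho>" using small[OF i] near_y[OF that(1)] p by auto
    then have "z = z'" using separated_small_ball_unique[OF sep that(1,2)] p p' by blast
    with that(3) show False ..
  qed
  show ?thesis
  proof (rule weight_from_net[OF y \<rho> Z(2) _ fin ball_weight_nonneg])
    show "\<And>e. e \<in> E \<inter> cball y (3*\<rho>/4) \<Longrightarrow> \<exists>z\<in>Z. dist e z \<le> 4*(\<delta>*\<rho>)"
      using net unfolding S_def by blast
    show "\<And>z. z \<in> Z \<Longrightarrow> I\<^sub>z z \<subseteq> I" unfolding I\<^sub>z_def by blast
  qed (use disjoint local_weight in auto)
qed

text \<open>Induction on \<open>J\<close>; in the step, either
  some ball meeting \<open>E \<inter> B(y,\<rho>)\<close> is large (\<open>large_ball_weight\<close>) or all are small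
  (\<open>small_balls_weight\<close>, with the induction hypothesis at scale \<open>\<delta>\<rho>\<close>).\<close>
lemma finite_cover_weight:
  fixes ctr :: "'b \<Rightarrow> 'a" and r :: "'b \<Rightarrow> real"
  assumes "y \<in> E" "0 < \<rho>" "ereal \<rho> < ediam E" "finite I"
    and "\<forall>i\<in>I. \<delta>^J * \<rho> \<le> r i \<and> r i \<le> 2*\<rho>"
    and "E \<inter> cball y \<rho> \<subseteq> (\<Union>i\<in>I. cball (ctr i) (r i))"
  shows "K * ball_weight \<mu> q y \<rho> \<le> (\<Sum>i\<in>I. ball_weight \<mu> q (ctr i) (r i))"
  using assms
proof (induction J arbitrary: y \<rho> I)
  have single: "K * ball_weight \<mu> q y \<rho> \<le> (\<Sum>i\<in>I. ball_weight \<mu> q (ctr i) (r i))"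
    if "finite I" "i \<in> I" "0 < \<rho>" "\<delta>*\<rho> \<le> r i" "r i \<le> 2*\<rho>"
      "p \<in> cball y \<rho>" "p \<in> cball (ctr i) (r i)" for y \<rho> I i p
  proof -
    have "K * ball_weight \<mu> q y \<rho> \<le> ball_weight \<mu> q (ctr i) (r i)"
      by (rule large_ball_weight[OF that(3-5,7,6)])
    also have "\<dots> \<le> (\<Sum>i\<in>I. ball_weight \<mu> q (ctr i) (r i))"
      using that(1,2) by (intro member_le_sum ball_weight_nonneg)
    finally show ?thesis .
  qed
  {
    case 0
    then obtain i where i: "i \<in> I" "y \<in> cball (ctr i) (r i)" by auto
    have "\<delta>*\<rho> \<le> \<rho>" using \<delta>_le \<open>0 < \<rho>\<close> by simp
    moreover have "\<rho> \<le> r i" "r i \<le> 2*\<rho>" using 0 i(1) by auto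
    ultimately have "\<delta>*\<rho> \<le> r i" "r i \<le> 2*\<rho>" by linarith+
    then show ?case using single[of I i \<rho> y y] 0 i by simp
  next
    case (Suc J)
    show ?case
    proof (cases "\<exists>i\<in>I. \<exists>p\<in>E \<inter> cball y \<rho>. p \<in> cball (ctr i) (r i) \<and> \<delta>*\<rho> \<le> r i")
      case True
      then obtain i p where i: "i \<in> I" "p \<in> E \<inter> cball y \<rho>" "p \<in> cball (ctr i) (r i)" "\<delta>*\<rho> \<le> r i"
        by blast
      moreover have "r i \<le> 2*\<rho>" using Suc.prems(5) i(1) by blast
      ultimately show ?thesis using single[of I i \<rho> p y] Suc.prems(2,4) by simp
    next
      case False
      have t_pos: "0 < \<delta>*\<rho>" using \<delta>_pos Suc.prems(2) by simp
      have t_diam: "ereal (\<delta>*\<rho>) < ediam E"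
        using \<delta>_le Suc.prems(2,3) by (simp add: le_less_trans[of _ "ereal \<rho>"])
      have lower: "\<forall>i\<in>I. \<delta>^J * (\<delta>*\<rho>) \<le> r i" using Suc.prems(5) by (simp add: mult_ac)
      show ?thesis
      proof (rule small_balls_weight[OF _ Suc.prems(1-4,6)])
        fix z I' assume z: "z \<in> E" and I': "I' \<subseteq> I" "\<forall>i\<in>I'. r i \<le> 2*(\<delta>*\<rho>)"
          and cov_z: "E \<inter> cball z (\<delta>*\<rho>) \<subseteq> (\<Union>i\<in>I'. cball (ctr i) (r i))"
        have "finite I'" using I'(1) Suc.prems(4) by (rule finite_subset)
        moreover have "\<forall>i\<in>I'. \<delta>^J * (\<delta>*\<rho>) \<le> r i \<and> r i \<le> 2*(\<delta>*\<rho>)" using lower I' by blast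
        ultimately show "K * ball_weight \<mu> q z (\<delta>*\<rho>) \<le> (\<Sum>i\<in>I'. ball_weight \<mu> q (ctr i) (r i))"
          by (rule Suc.IH[OF z t_pos t_diam _ _ cov_z])
      next
        fix i p assume "i \<in> I" "p \<in> E \<inter> cball y \<rho>" "p \<in> cball (ctr i) (r i)"
        then show "r i < \<delta>*\<rho>" using False by (meson not_le)
      qed
    qed
  }
qed

text \<open>The estimate for arbitrary countable covers of a compact piece \<open>E \<inter> B(w,R)\<close>: pass to a
  finite cover by doubled balls, apply \<open>finite_cover_weight\<close>, and undo the doubling.\<close>
lemma countable_cover_weight:
  assumes w: "w \<in> E" "0 < R" "ereal R < ediam E" and cpt: "compact (E \<inter> cball w R)"
    and rad: "\<forall>b\<in>\<B>. 0 < snd b \<and> snd b \<le> R"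
    and cov: "E \<inter> cball w R \<subseteq> (\<Union>b\<in>\<B>. cball (fst b) (snd b))"
  shows "ennreal (K * 2 powr q / Cd * ball_weight \<mu> q w R)
     \<le> (\<Sum>\<^sub>\<infinity>b\<in>\<B>. ennreal (ball_weight \<mu> q (fst b) (snd b)))"
proof -
  define g where "g b = ball_weight \<mu> q (fst b) (snd b)" for b :: "'a \<times> real"
  obtain \<B>' where \<B>': "\<B>' \<subseteq> \<B>" "finite \<B>'" "E \<inter> cball w R \<subseteq> (\<Union>b\<in>\<B>'. cball (fst b) (2 * snd b))"
    using finite_doubled_subcover[OF cpt cov] rad by blast
  obtain J where J: "\<And>b. b \<in> \<B>' \<Longrightarrow> \<delta>^J * R \<le> 2 * snd b"
    by (rule power_scale_below_finite[of \<delta> \<B>' "\<lambda>b. 2 * snd b" R]) (use \<delta>_pos \<delta>_le \<B>' rad in auto)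
  have "K * ball_weight \<mu> q w R \<le> (\<Sum>b\<in>\<B>'. ball_weight \<mu> q (fst b) (2 * snd b))"
    using \<B>' J rad by (intro finite_cover_weight[OF w]) auto
  also have "\<dots> \<le> (\<Sum>b\<in>\<B>'. 2 powr (-q) * Cd * g b)"
    unfolding g_def using \<B>' rad by (intro sum_mono ball_weight_double) auto
  finally have "K * ball_weight \<mu> q w R \<le> 2 powr (-q) * Cd * (\<Sum>b\<in>\<B>'. g b)"
    by (simp add: sum_distrib_left)
  then have "K * 2 powr q / Cd * ball_weight \<mu> q w R \<le> (\<Sum>b\<in>\<B>'. g b)"
    using doubling_const_ge_1 by (simp add: powr_minus field_simps)
  then have "ennreal (K * 2 powr q / Cd * ball_weight \<mu> q w R) \<le> (\<Sum>b\<in>\<B>'. ennreal (g b))"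
    by (simp add: g_def ball_weight_nonneg ennreal_leI)
  also have "\<dots> = (\<Sum>\<^sub>\<infinity>b\<in>\<B>'. ennreal (g b))" using \<B>'(2) by simp
  also have "\<dots> \<le> (\<Sum>\<^sub>\<infinity>b\<in>\<B>. ennreal (g b))"
    using \<B>'(1) by (intro infsum_mono_neutral) (auto intro: nonneg_summable_on_complete)
  finally show ?thesis unfolding g_def .
qed

end

theorem lemma5p1:
  fixes \<mu> :: "('a::complete_space) measure" and E :: "'a set" and q :: real
  assumes "doubling_mms \<mu>"
    and "closed E"
    and "upper_assouad_codim \<mu> E < ereal q"
  shows "\<exists>C>0. \<forall>w\<in>E. \<forall>R. 0 < R \<longrightarrow> ereal R < ediam E \<longrightarrow>
           hausdorff_content_codim \<mu> q R (E \<inter> cball w R) \<ge> ennreal (C * R powr (-q) * measure \<mu> (cball w R))"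
proof -
  obtain Cd where dbl: "doubling_measure \<mu> Cd"
    using assms(1) by (rule doubling_mms_imp_doubling_measure)
  obtain s c where "0 \<le> s" "s < q" "c > 0" and "\<And>x r R. x \<in> E \<Longrightarrow> 0 < r \<Longrightarrow> r < R \<Longrightarrow>
      ereal R < ediam E \<Longrightarrow> c * (r / R) powr s \<le> measure \<mu> (nbhd E r \<inter> cball x R) / measure \<mu> (cball x R)"
    using upper_assouad_codim_less[OF assms(3)] by metis
  interpret doubling_measure \<mu> Cd by (rule dbl)
  interpret codim_bound \<mu> Cd E c s q by unfold_locales fact+
  show ?thesis
  proof (intro exI[of _ "K * 2 powr q / Cd"] conjI ballI allI impI)
    show "0 < K * 2 powr q / Cd" using K_pos doubling_const_ge_1 by simp
    fix w R assume w: "w \<in> E" "0 < R" "ereal R < ediam E"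
    have "closed (E \<inter> cball w R)" using assms(2) by (intro closed_Int closed_cball)
    moreover have "bounded (E \<inter> cball w R)" by (rule bounded_subset[OF bounded_cball]) blast
    ultimately have cpt: "compact (E \<inter> cball w R)" by (rule doubling_closed_bounded_compact[OF dbl])
    have "ennreal (K * 2 powr q / Cd * ball_weight \<mu> q w R) \<le> hausdorff_content_codim \<mu> q R (E \<inter> cball w R)"
      by (intro hausdorff_content_codim_lower_bound countable_cover_weight[OF w cpt])
    then show "ennreal (K * 2 powr q / Cd * R powr (-q) * measure \<mu> (cball w R))
        \<le> hausdorff_content_codim \<mu> q R (E \<inter> cball w R)"
      unfolding ball_weight_def by (simp add: mult.assoc)
  qed
qed

end
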